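(* Assume (A0) and (A3'). For each $N$ let $\mathbf x^N=(x^N_1,\dots,x^N_N)\in S^N$ and $\mathbf a^N\in\mathbf D(\mathbf x^N)$, and set $Q^N:=\mu[(\mathbf x^N,\mathbf a^N)]$, $\mu^N:=\mu[\mathbf x^N]$. Suppose $Q^N\Rightarrow Q\in\mathbb P(D)$ weakly, and let $\mu$ be the first marginal of $Q$. Let $Z^1,Z^2,\dots$ be i.i.d. $\mathcal Z$-valued random variables with law $\mathbb P^Z$ and let $z^0\in\mathcal Z$. Then almost surely $$\frac1N\sum_{i=1}^N\delta_{T(x^N_i,a^N_i,\mu^N,Z^i,z^0)}\Rightarrow\tilde T(\mu,Q,z^0)\quad(N\to\infty),$$ where $\tilde T(\mu,Q,z^0)(B):=\int_D\mathbb P(T(x,a,\mu,Z^1,z^0)\in B)\,Q(d(x,a))$.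
   Context: $S$ is a compact Borel subset of a Euclidean space, $A$ a Borel set, $D(x)\subset A$ for $x\in S$, $D:=\{(x,a):x\in S,a\in D(x)\}$, $\mathbf D(\mathbf x):=\prod_iD(x_i)$. $\mathbb P(S)$, $\mathbb P(D)$ carry the topology of weak convergence ($\Rightarrow$). $\mu[\mathbf x]:=\frac1N\sum_i\delta_{x_i}$, $\mu[(\mathbf x,\mathbf a)]:=\frac1N\sum_i\delta_{(x_i,a_i)}$. $T:S\times A\times\mathbb P(S)\times\mathcal Z^2\to S$ is measurable. (A0): $D$ is compact. (A3'): $\mathcal Z$ is a compact metric space and $(x,a,\mu,z,z_0)\mapsto T(x,a,\mu,z,z_0)$ is continuous. *)

theory Defs
  imports "HOL-Probability.Probability"
begin

text \<open>Probability measures on a Borel set X of a Euclidean (or metric) space,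
  represented as Borel probability measures on the ambient type that are
  concentrated on X.\<close>
definition Prob_on :: "'x::topological_space set \<Rightarrow> 'x measure set" where
  "Prob_on X = {M. sets M = sets borel \<and> prob_space M \<and> emeasure M X = 1}"

definition Cb :: "'x::topological_space set \<Rightarrow> ('x \<Rightarrow> real) set" where
  "Cb X = {f. continuous_on X f \<and> bounded (f ` X)}"

definition weak_conv_on :: "'x::topological_space set \<Rightarrow> (nat \<Rightarrow> 'x measure) \<Rightarrow> 'x measure \<Rightarrow> bool" where
  "weak_conv_on X Ms L \<longleftrightarrow>
     (\<forall>f\<in>Cb X. (\<lambda>n. integral\<^sup>L (Ms n) f) \<longlonglongrightarrow> integral\<^sup>L L f)"

definition weak_topology :: "'x::topological_space set \<Rightarrow> 'x measure topology" where
  "weak_topology X =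
     pullback_topology (Prob_on X) (\<lambda>M. restrict (\<lambda>f. integral\<^sup>L M f) (Cb X))
       (product_topology (\<lambda>_. euclideanreal) (Cb X))"

definition emp_measure :: "nat \<Rightarrow> (nat \<Rightarrow> 'x::topological_space) \<Rightarrow> 'x measure" where
  "emp_measure N xs = measure_of UNIV (sets borel)
     (\<lambda>B. ennreal (real (card {i\<in>{1..N}. xs i \<in> B}) / real N))"

definition Ttilde ::
  "('x::topological_space \<Rightarrow> 'a \<Rightarrow> 'x measure \<Rightarrow> 'z \<Rightarrow> 'z \<Rightarrow> 'x) \<Rightarrow> 'w measure \<Rightarrow> ('w \<Rightarrow> 'z)
   \<Rightarrow> ('x \<times> 'a) set \<Rightarrow> 'x measure \<Rightarrow> ('x \<times> 'a) measure \<Rightarrow> 'z \<Rightarrow> 'x measure" where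
  "Ttilde T M Z1 D \<mu> Q z0 = measure_of UNIV (sets borel)
     (\<lambda>B. \<integral>\<^sup>+ p\<in>D. emeasure M {\<omega>\<in>space M. T (fst p) (snd p) \<mu> (Z1 \<omega>) z0 \<in> B} \<partial>Q)"

end

theory Submission
  imports Defs
begin

text \<open>
  Write p = (x, a) and E g p nu for the expectation of g (T x a nu Z z0).  Given the initial
  data, the new states T x_i a_i mu^N Z^i z0 are independent, so for a bounded test function g
  Hoeffding's inequality and Borel-Cantelli show that, almost surely, the empirical mean of g
  over them differs from (1/N) sum_i E g p_i mu^N by a null sequence.  Continuity of T and
  dominated convergence make E g jointly continuous in (p, nu); as mu^N converges weakly to mu,
  E g _ mu^N then converges to E g _ mu uniformly on the compact set D, and Q^N => Q yields
  convergence of (1/N) sum_i E g p_i mu^N to the Q-integral of E g _ mu, which by Fubini is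
  the integral of g against Ttilde mu Q z0.  Finally, a countable family of rational
  polynomials, dense in C(S) by Stone-Weierstrass, makes the exceptional null set independent
  of g.
\<close>

section \<open>Empirical measures and weak convergence\<close>

lemma emp_measure_eq_distr:
  fixes xs :: "nat \<Rightarrow> 'x::topological_space"
  assumes "N \<ge> 1"
  shows "emp_measure N xs = distr (measure_pmf (pmf_of_set {1..N})) borel xs"
proof -
  let ?R = "distr (measure_pmf (pmf_of_set {1..N})) borel xs"
  have "emp_measure N xs = measure_of UNIV (sets borel) (emeasure ?R)"
    unfolding emp_measure_def
  proof (rule measure_of_eq)
    fix B :: "'x set" assume "B \<in> sigma_sets UNIV (sets borel)"
    then have "B \<in> sets borel" by (simp add: sets.sigma_sets_eq[of borel, simplified])
    then have "emeasure ?R B = ennreal (real (card ({1..N} \<inter> xs -` B)) / real (card {1..N}))"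
      using assms by (simp add: emeasure_distr emeasure_pmf_of_set)
    also have "{1..N} \<inter> xs -` B = {i\<in>{1..N}. xs i \<in> B}" by auto
    finally show "ennreal (real (card {i\<in>{1..N}. xs i \<in> B}) / real N) = emeasure ?R B" by simp
  qed auto
  also have "\<dots> = ?R" using measure_of_of_measure[of ?R] by simp
  finally show ?thesis .
qed

lemma sets_emp_measure [simp]: "sets (emp_measure N xs) = sets borel"
  unfolding emp_measure_def by (simp add: sets_measure_of sets.sigma_sets_eq[of borel, simplified])

lemma integral_emp_measure:
  assumes "N \<ge> 1" "f \<in> borel_measurable borel"
  shows "integral\<^sup>L (emp_measure N xs) f = (\<Sum>i\<in>{1..N}. f (xs i)) / real N"
  using assms by (simp add: emp_measure_eq_distr integral_distr integral_pmf_of_set)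

lemma emp_measure_in_Prob_on:
  assumes "N \<ge> 1" "X \<in> sets borel" "\<And>i. i \<in> {1..N} \<Longrightarrow> xs i \<in> X"
  shows "emp_measure N xs \<in> Prob_on X"
proof -
  have "{1..N} \<inter> xs -` X = {1..N}" using assms(3) by auto
  then have "emeasure (emp_measure N xs) X = 1"
    using assms(1,2) by (simp add: emp_measure_eq_distr emeasure_distr emeasure_pmf_of_set)
  then show ?thesis
    using assms(1) by (simp add: Prob_on_def emp_measure_eq_distr prob_space.prob_space_distr prob_space_measure_pmf)
qed

lemma emp_measure_comp:
  fixes xs :: "nat \<Rightarrow> 'x::topological_space" and \<phi> :: "'x \<Rightarrow> 'y::topological_space"
  assumes "N \<ge> 1" "\<phi> \<in> borel_measurable borel"
  shows "emp_measure N (\<phi> \<circ> xs) = distr (emp_measure N xs) borel \<phi>"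
  using assms by (simp add: emp_measure_eq_distr distr_distr)

lemma integral_not_borel_measurable:
  assumes "sets N = sets borel" "f \<notin> borel_measurable borel"
  shows "integral\<^sup>L N f = 0"
  using assms measurable_cong_sets[OF assms(1) refl, of borel]
  by (metis borel_measurable_integrable not_integrable_integral_eq)

lemma Prob_on_sets: "P \<in> Prob_on X \<Longrightarrow> sets P = sets borel"
  and Prob_on_prob_space: "P \<in> Prob_on X \<Longrightarrow> prob_space P"
  by (simp_all add: Prob_on_def)

lemma AE_in_Prob_on:
  assumes "P \<in> Prob_on X" "X \<in> sets borel"
  shows "AE x in P. x \<in> X"
proof -
  interpret prob_space P using assms(1) by (rule Prob_on_prob_space)
  show ?thesis
    using assms by (intro AE_prob_1) (auto simp: Prob_on_def emeasure_eq_measure)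
qed

lemma abs_integral_diff_le_Prob_on:
  fixes f g :: "'x::topological_space \<Rightarrow> real"
  assumes P: "P \<in> Prob_on X" "X \<in> sets borel"
    and f: "f \<in> borel_measurable borel" "bounded (f ` X)"
    and g: "g \<in> borel_measurable borel" "bounded (g ` X)"
    and le: "\<And>x. x \<in> X \<Longrightarrow> \<bar>f x - g x\<bar> \<le> c"
  shows "\<bar>integral\<^sup>L P f - integral\<^sup>L P g\<bar> \<le> c"
proof -
  interpret prob_space P using P(1) by (rule Prob_on_prob_space)
  have meas: "measurable P borel = measurable borel borel"
    using Prob_on_sets[OF P(1)] by (rule measurable_cong_sets) simp
  have integrable: "integrable P h"
    if h: "h \<in> borel_measurable borel" "bounded (h ` X)" for h :: "'x \<Rightarrow> real"
  proof -
    obtain B where B: "\<forall>x\<in>X. \<bar>h x\<bar> \<le> B" using h(2) by (auto simp: bounded_iff)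
    from AE_in_Prob_on[OF P] have "AE x in P. norm (h x) \<le> B" by eventually_elim (use B in auto)
    then show ?thesis using h(1) meas by (intro integrable_const_bound) auto
  qed
  have "\<bar>integral\<^sup>L P f - integral\<^sup>L P g\<bar> = \<bar>\<integral>x. f x - g x \<partial>P\<bar>"
    using integrable[OF f] integrable[OF g] by simp
  also have "\<dots> \<le> (\<integral>x. \<bar>f x - g x\<bar> \<partial>P)"
    by (rule integral_abs_bound)
  also have "\<dots> \<le> (\<integral>x. c \<partial>P)"
    using AE_in_Prob_on[OF P] le integrable[OF f] integrable[OF g]
    by (intro integral_mono_AE) (auto elim!: eventually_mono)
  finally show ?thesis by (simp add: prob_space)
qed

lemma topspace_weak_topology: "topspace (weak_topology X) = Prob_on X"
  by (auto simp: weak_topology_def topspace_pullback_topology topspace_product_topology)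

lemma limitin_weak_topologyI:
  assumes ev: "eventually (\<lambda>n. Ms n \<in> Prob_on X) F" and L: "L \<in> Prob_on X"
    and conv: "\<And>f. f \<in> Cb X \<Longrightarrow> ((\<lambda>n. integral\<^sup>L (Ms n) f) \<longlongrightarrow> integral\<^sup>L L f) F"
  shows "limitin (weak_topology X) Ms L F"
proof -
  let ?\<iota> = "\<lambda>P. restrict (\<lambda>f. integral\<^sup>L P f) (Cb X)"
  let ?P = "product_topology (\<lambda>_. euclideanreal) (Cb X)"
  have lim: "limitin ?P (\<lambda>n. ?\<iota> (Ms n)) (?\<iota> L) F"
    unfolding limitin_componentwise using conv by (simp add: topspace_product_topology)
  show ?thesis unfolding limitin_def
  proof (intro conjI allI impI)
    show "L \<in> topspace (weak_topology X)" using L by (simp add: topspace_weak_topology)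
    fix U assume U: "openin (weak_topology X) U \<and> L \<in> U"
    then obtain V where V: "openin ?P V" "U = ?\<iota> -` V \<inter> Prob_on X"
      by (auto simp: weak_topology_def openin_pullback_topology)
    with U lim have "eventually (\<lambda>n. ?\<iota> (Ms n) \<in> V) F" unfolding limitin_def by blast
    with ev show "eventually (\<lambda>n. Ms n \<in> U) F"
      by eventually_elim (use V in auto)
  qed
qed

lemma limitin_weak_topology_eventually_Prob_on:
  assumes "limitin (weak_topology X) Ms L F"
  shows "eventually (\<lambda>n. Ms n \<in> Prob_on X) F"
  using limitinD[OF assms openin_topspace limitin_topspace[OF assms]] by (simp add: topspace_weak_topology)

lemma weak_conv_on_distr:
  fixes \<phi> :: "'x::topological_space \<Rightarrow> 'y::topological_space"
  assumes conv: "weak_conv_on X Ms L"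
    and sets: "\<And>n. sets (Ms n) = sets borel" "sets L = sets borel"
    and \<phi>: "continuous_on UNIV \<phi>" "\<phi> ` X \<subseteq> Y"
  shows "weak_conv_on Y (\<lambda>n. distr (Ms n) borel \<phi>) (distr L borel \<phi>)"
  unfolding weak_conv_on_def
proof
  fix f assume f: "f \<in> Cb Y"
  show "(\<lambda>n. integral\<^sup>L (distr (Ms n) borel \<phi>) f) \<longlonglongrightarrow> integral\<^sup>L (distr L borel \<phi>) f"
  proof (cases "f \<in> borel_measurable borel")
    case False
    then show ?thesis by (simp add: integral_not_borel_measurable[OF _ False])
  next
    case True
    have \<phi>_meas: "\<phi> \<in> measurable P borel" if "sets P = sets borel" for P :: "'x measure"
      unfolding measurable_cong_sets[OF that refl] by (rule borel_measurable_continuous_onI[OF \<phi>(1)])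
    have f\<phi>: "(\<lambda>x. f (\<phi> x)) \<in> Cb X"
    proof -
      have "continuous_on Y f" using f by (simp add: Cb_def)
      then have "continuous_on X (\<lambda>x. f (\<phi> x))"
        using continuous_on_subset[OF \<phi>(1) subset_UNIV] \<phi>(2) by (rule continuous_on_compose2)
      moreover have "bounded ((\<lambda>x. f (\<phi> x)) ` X)"
        using f \<phi>(2) by (auto simp: Cb_def intro: bounded_subset[of "f ` Y"])
      ultimately show ?thesis by (simp add: Cb_def)
    qed
    have "(\<lambda>n. integral\<^sup>L (Ms n) (\<lambda>x. f (\<phi> x))) \<longlonglongrightarrow> integral\<^sup>L L (\<lambda>x. f (\<phi> x))"
      using conv f\<phi> unfolding weak_conv_on_def by (rule bspec)
    then show ?thesis
      using True sets by (subst (1 2) integral_distr) (auto intro: \<phi>_meas)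
  qed
qed

section \<open>Rational polynomials as test functions\<close>

text \<open>Countably many test functions suffice: polynomials in the coordinates with rational
  coefficients are uniformly dense in C(X) for compact X.\<close>

datatype qpoly = QConst rat | QCoord nat | QAdd qpoly qpoly | QMul qpoly qpoly

instance qpoly :: countable by countable_datatype

primrec qpoly_eval :: "qpoly \<Rightarrow> 'x::euclidean_space \<Rightarrow> real" where
  "qpoly_eval (QConst q) x = of_rat q"
| "qpoly_eval (QCoord n) x = x \<bullet> from_nat_into Basis n"
| "qpoly_eval (QAdd e e') x = qpoly_eval e x + qpoly_eval e' x"
| "qpoly_eval (QMul e e') x = qpoly_eval e x * qpoly_eval e' x"

lemma continuous_on_qpoly_eval: "continuous_on X (qpoly_eval e)"
  by (induction e) (auto intro!: continuous_intros)

definition qpoly_approximable :: "'x::euclidean_space set \<Rightarrow> ('x \<Rightarrow> real) \<Rightarrow> bool" where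
  "qpoly_approximable X h \<longleftrightarrow> (\<forall>\<epsilon>>0. \<exists>e. \<forall>x\<in>X. \<bar>h x - qpoly_eval e x\<bar> < \<epsilon>)"

lemma qpoly_approximable_const: "qpoly_approximable X (\<lambda>_. c)"
  unfolding qpoly_approximable_def
proof (intro allI impI)
  fix \<epsilon> :: real assume "\<epsilon> > 0"
  then have "c - \<epsilon> < c + \<epsilon>" by simp
  then obtain r where r: "r \<in> \<rat>" "c - \<epsilon> < r" "r < c + \<epsilon>"
    using Rats_dense_in_real by blast
  obtain q where "r = of_rat q" using r(1) by (rule Rats_cases)
  with r have "\<forall>x\<in>X. \<bar>c - qpoly_eval (QConst q) x\<bar> < \<epsilon>" by (simp add: abs_less_iff)
  then show "\<exists>e. \<forall>x\<in>X. \<bar>c - qpoly_eval e x\<bar> < \<epsilon>" by (rule exI)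
qed

lemma qpoly_approximable_coord:
  assumes "b \<in> Basis"
  shows "qpoly_approximable X (\<lambda>x. x \<bullet> b)"
proof -
  obtain n where "from_nat_into Basis n = b"
    using from_nat_into_surj[OF countable_finite[OF finite_Basis] assms] by blast
  then show ?thesis
    unfolding qpoly_approximable_def by (intro allI impI exI[of _ "QCoord n"]) auto
qed

lemma qpoly_approximable_add:
  assumes "qpoly_approximable X h" "qpoly_approximable X k"
  shows "qpoly_approximable X (\<lambda>x. h x + k x)"
  unfolding qpoly_approximable_def
proof (intro allI impI)
  fix \<epsilon> :: real assume "\<epsilon> > 0"
  then obtain e e' where e: "\<forall>x\<in>X. \<bar>h x - qpoly_eval e x\<bar> < \<epsilon>/2"
    and e': "\<forall>x\<in>X. \<bar>k x - qpoly_eval e' x\<bar> < \<epsilon>/2"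
    using assms half_gt_zero unfolding qpoly_approximable_def by metis
  then show "\<exists>e. \<forall>x\<in>X. \<bar>h x + k x - qpoly_eval e x\<bar> < \<epsilon>"
  proof (intro exI[of _ "QAdd e e'"] ballI)
    fix x assume "x \<in> X"
    with e e' have "\<bar>h x - qpoly_eval e x\<bar> < \<epsilon>/2" "\<bar>k x - qpoly_eval e' x\<bar> < \<epsilon>/2" by auto
    then show "\<bar>h x + k x - qpoly_eval (QAdd e e') x\<bar> < \<epsilon>"
      using abs_diff_triangle_ineq[of "h x" "k x" "qpoly_eval e x" "qpoly_eval e' x"] by simp
  qed
qed

lemma qpoly_approximable_mult:
  assumes h: "qpoly_approximable X h" "bounded (h ` X)"
    and k: "qpoly_approximable X k" "bounded (k ` X)"
  shows "qpoly_approximable X (\<lambda>x. h x * k x)"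
  unfolding qpoly_approximable_def
proof (intro allI impI)
  fix \<epsilon> :: real assume \<epsilon>: "\<epsilon> > 0"
  obtain Bh Bk where B: "Bh > 0" "Bk > 0" "\<forall>x\<in>X. \<bar>h x\<bar> \<le> Bh" "\<forall>x\<in>X. \<bar>k x\<bar> \<le> Bk"
    using h(2) k(2) by (fastforce simp: bounded_pos)
  define \<delta> where "\<delta> = min 1 (\<epsilon> / 2 / (Bh + Bk + 1))"
  have "\<delta> \<le> \<epsilon> / 2 / (Bh + Bk + 1)" by (simp add: \<delta>_def)
  then have \<delta>_bound: "\<delta> * (Bh + Bk + 1) \<le> \<epsilon> / 2"
    using pos_le_divide_eq[of "Bh + Bk + 1" \<delta> "\<epsilon> / 2"] B by simp
  have \<delta>: "\<delta> > 0" "\<delta> \<le> 1" using \<epsilon> B by (simp_all add: \<delta>_def)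
  obtain e e' where e: "\<forall>x\<in>X. \<bar>h x - qpoly_eval e x\<bar> < \<delta>" "\<forall>x\<in>X. \<bar>k x - qpoly_eval e' x\<bar> < \<delta>"
    using h(1) k(1) \<delta>(1) unfolding qpoly_approximable_def by metis
  show "\<exists>e. \<forall>x\<in>X. \<bar>h x * k x - qpoly_eval e x\<bar> < \<epsilon>"
  proof (intro exI[of _ "QMul e e'"] ballI)
    fix x assume x: "x \<in> X"
    define a a' b b' where "a = h x" "a' = qpoly_eval e x" "b = k x" "b' = qpoly_eval e' x"
    have close: "\<bar>a - a'\<bar> < \<delta>" "\<bar>b - b'\<bar> < \<delta>" and bound: "\<bar>a\<bar> \<le> Bh" "\<bar>b'\<bar> \<le> Bk + 1"
      using e B x \<delta>(2) by (fastforce simp: a_a'_b_b'_def)+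
    have "\<bar>a * b - a' * b'\<bar> = \<bar>a * (b - b') + (a - a') * b'\<bar>" by (simp add: algebra_simps)
    also have "\<dots> \<le> \<bar>a\<bar> * \<bar>b - b'\<bar> + \<bar>a - a'\<bar> * \<bar>b'\<bar>" by (simp add: abs_mult[symmetric] abs_triangle_ineq)
    also have "\<dots> \<le> Bh * \<delta> + \<delta> * (Bk + 1)"
      using close bound by (intro add_mono mult_mono) auto
    also have "\<dots> < \<epsilon>" using \<delta>_bound \<epsilon> by (simp add: algebra_simps)
    finally show "\<bar>h x * k x - qpoly_eval (QMul e e') x\<bar> < \<epsilon>" by (simp add: a_a'_b_b'_def)
  qed
qed

lemma qpoly_approximable_sum:
  assumes "finite I" "\<And>i. i \<in> I \<Longrightarrow> qpoly_approximable X (h i)"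
  shows "qpoly_approximable X (\<lambda>x. \<Sum>i\<in>I. h i x)"
  using assms by (induction I rule: finite_induct) (auto intro: qpoly_approximable_const qpoly_approximable_add)

lemma bounded_real_polynomial_function_image:
  assumes "compact X" "real_polynomial_function p"
  shows "bounded (p ` X)"
proof -
  have "continuous_on X p"
    using continuous_real_polymonial_function[OF assms(2)] by (simp add: continuous_at_imp_continuous_on)
  then show ?thesis by (rule compact_imp_bounded[OF compact_continuous_image[OF _ assms(1)]])
qed

lemma qpoly_approximable_real_polynomial_function:
  assumes X: "compact X" and p: "real_polynomial_function p"
  shows "qpoly_approximable X p"
  using p
proof (induction p rule: real_polynomial_function.induct)
  case (linear f)
  have "f x = (\<Sum>b\<in>Basis. (x \<bullet> b) * f b)" for x
    using Linear_Algebra.linear_componentwise[OF bounded_linear.linear[OF linear], of x 1] by simp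
  then have f: "f = (\<lambda>x. \<Sum>b\<in>Basis. (x \<bullet> b) * f b)" by (rule ext)
  have "qpoly_approximable X (\<lambda>x. (x \<bullet> b) * f b)" if b: "b \<in> Basis" for b
  proof (rule qpoly_approximable_mult[OF qpoly_approximable_coord[OF b] _ qpoly_approximable_const])
    show "bounded ((\<lambda>x. x \<bullet> b) ` X)"
      using bounded_linear_image[OF compact_imp_bounded[OF X] bounded_linear_inner_left] .
  qed (rule bounded_subset[of "{f b}"]; auto)
  then show ?case by (subst f) (intro qpoly_approximable_sum finite_Basis)
next
  case (const c)
  show ?case by (rule qpoly_approximable_const)
next
  case (add f g)
  then show ?case by (intro qpoly_approximable_add)
next
  case (mult f g)
  then show ?case
    using bounded_real_polynomial_function_image[OF X] by (intro qpoly_approximable_mult) auto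
qed

lemma qpoly_dense:
  fixes f :: "'x::euclidean_space \<Rightarrow> real"
  assumes "compact X" "continuous_on X f" "\<epsilon> > 0"
  obtains e where "\<And>x. x \<in> X \<Longrightarrow> \<bar>f x - qpoly_eval e x\<bar> < \<epsilon>"
proof -
  obtain p where p: "real_polynomial_function p" "\<And>x. x \<in> X \<Longrightarrow> \<bar>f x - p x\<bar> < \<epsilon>/2"
    using Stone_Weierstrass_real_polynomial_function[OF assms(1,2), of "\<epsilon>/2"] assms(3) by auto
  obtain e where e: "\<forall>x\<in>X. \<bar>p x - qpoly_eval e x\<bar> < \<epsilon>/2"
    using qpoly_approximable_real_polynomial_function[OF assms(1) p(1)] assms(3)
    unfolding qpoly_approximable_def by (meson half_gt_zero)
  show ?thesis
  proof (rule that)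
    fix x assume "x \<in> X"
    with e p(2) have "\<bar>f x - p x\<bar> < \<epsilon>/2" "\<bar>p x - qpoly_eval e x\<bar> < \<epsilon>/2" by auto
    moreover have "\<bar>f x - qpoly_eval e x\<bar> \<le> \<bar>f x - p x\<bar> + \<bar>p x - qpoly_eval e x\<bar>"
      using abs_diff_triangle_ineq[of "f x" "p x" "p x" "qpoly_eval e x"] by simp
    ultimately show "\<bar>f x - qpoly_eval e x\<bar> < \<epsilon>" by linarith
  qed
qed

lemma weak_conv_on_qpolyI:
  fixes X :: "'x::euclidean_space set"
  assumes X: "compact X" and Ms: "eventually (\<lambda>n. Ms n \<in> Prob_on X) sequentially"
    and L: "L \<in> Prob_on X"
    and conv: "\<And>e. (\<lambda>n. integral\<^sup>L (Ms n) (qpoly_eval e)) \<longlonglongrightarrow> integral\<^sup>L L (qpoly_eval e)"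
  shows "weak_conv_on X Ms L"
  unfolding weak_conv_on_def
proof
  fix f assume "f \<in> Cb X"
  then have f: "continuous_on X f" "bounded (f ` X)" by (simp_all add: Cb_def)
  have X_borel: "X \<in> sets borel" using X by (simp add: compact_imp_closed)
  show "(\<lambda>n. integral\<^sup>L (Ms n) f) \<longlonglongrightarrow> integral\<^sup>L L f"
  proof (cases "f \<in> borel_measurable borel")
    case False
    from Ms have "eventually (\<lambda>n. integral\<^sup>L (Ms n) f = 0) sequentially"
      by eventually_elim (use False in \<open>simp add: Prob_on_sets integral_not_borel_measurable\<close>)
    moreover have "integral\<^sup>L L f = 0"
      using False L by (simp add: Prob_on_sets integral_not_borel_measurable)
    ultimately show ?thesis by (simp add: tendsto_eventually)
  next
    case True
    show ?thesis
    proof (rule tendstoI)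
      fix \<epsilon> :: real assume \<epsilon>: "\<epsilon> > 0"
      then obtain e where e: "\<And>x. x \<in> X \<Longrightarrow> \<bar>f x - qpoly_eval e x\<bar> < \<epsilon>/3"
        using qpoly_dense[OF X f(1), of "\<epsilon>/3"] by auto
      have e_bounded: "bounded (qpoly_eval e ` X)"
        by (rule compact_imp_bounded[OF compact_continuous_image[OF continuous_on_qpoly_eval X]])
      have close: "\<bar>integral\<^sup>L P f - integral\<^sup>L P (qpoly_eval e)\<bar> \<le> \<epsilon>/3" if "P \<in> Prob_on X" for P
        using that X_borel True f(2) e_bounded e
        by (intro abs_integral_diff_le_Prob_on) (auto intro: less_imp_le borel_measurable_continuous_onI continuous_on_qpoly_eval)
      have "eventually (\<lambda>n. dist (integral\<^sup>L (Ms n) (qpoly_eval e)) (integral\<^sup>L L (qpoly_eval e)) < \<epsilon>/3) sequentially"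
        using \<epsilon> by (intro tendstoD[OF conv]) simp
      with Ms show "eventually (\<lambda>n. dist (integral\<^sup>L (Ms n) f) (integral\<^sup>L L f) < \<epsilon>) sequentially"
      proof eventually_elim
        case (elim n)
        with close[OF elim(1)] close[OF L] show ?case unfolding dist_real_def by arith
      qed
    qed
  qed
qed

section \<open>Uniform limits and empirical averages\<close>

lemma uniform_limit_compactI:
  fixes F :: "nat \<Rightarrow> 'p::metric_space \<Rightarrow> 'b::metric_space"
  assumes D: "compact D" and \<Phi>: "continuous_on D \<Phi>"
    and conv: "\<And>r pf p. strict_mono r \<Longrightarrow> (\<And>n. pf n \<in> D) \<Longrightarrow> pf \<longlonglongrightarrow> p \<Longrightarrow> p \<in> D \<Longrightarrow>
                 (\<lambda>n. F (r n) (pf n)) \<longlonglongrightarrow> \<Phi> p"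
  shows "uniform_limit D F \<Phi> sequentially"
  unfolding uniform_limit_iff
proof (intro allI impI, rule ccontr)
  fix \<epsilon> :: real assume \<epsilon>: "\<epsilon> > 0"
  let ?bad = "\<lambda>n. \<exists>p\<in>D. \<epsilon> \<le> dist (F n p) (\<Phi> p)"
  assume "\<not> (\<forall>\<^sub>F n in sequentially. \<forall>p\<in>D. dist (F n p) (\<Phi> p) < \<epsilon>)"
  then have "\<forall>m. \<exists>n\<ge>m. ?bad n" by (auto simp: eventually_sequentially not_less)
  then have "infinite {n. ?bad n}" by (simp add: infinite_nat_iff_unbounded_le)
  from infinite_enumerate[OF this] obtain r :: "nat \<Rightarrow> nat" where r: "strict_mono r" "\<forall>n. ?bad (r n)"
    by blast
  then have "\<forall>n. \<exists>p. p \<in> D \<and> \<epsilon> \<le> dist (F (r n) p) (\<Phi> p)" by blast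
  then obtain pf where "\<forall>n. pf n \<in> D \<and> \<epsilon> \<le> dist (F (r n) (pf n)) (\<Phi> (pf n))"
    by (rule choice[THEN exE])
  then have pf: "\<And>n. pf n \<in> D" "\<And>n. \<epsilon> \<le> dist (F (r n) (pf n)) (\<Phi> (pf n))" by auto
  obtain p s where p: "p \<in> D" "strict_mono s" "(pf \<circ> s) \<longlonglongrightarrow> p"
    using seq_compactE[OF compact_imp_seq_compact[OF D], of pf] pf(1) by blast
  have "(\<lambda>n. F (r (s n)) (pf (s n))) \<longlonglongrightarrow> \<Phi> p"
    using p pf(1) by (intro conv strict_mono_o[OF r(1) p(2), unfolded o_def]) (auto simp: o_def)
  moreover have "(\<lambda>n. \<Phi> (pf (s n))) \<longlonglongrightarrow> \<Phi> p"
    using p pf(1) \<Phi> by (intro continuous_on_tendsto_compose[of D \<Phi>]) (auto simp: o_def)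
  ultimately have "(\<lambda>n. dist (F (r (s n)) (pf (s n))) (\<Phi> (pf (s n)))) \<longlonglongrightarrow> dist (\<Phi> p) (\<Phi> p)"
    by (rule tendsto_dist)
  then have "eventually (\<lambda>n. dist (F (r (s n)) (pf (s n))) (\<Phi> (pf (s n))) < \<epsilon>) sequentially"
    using \<epsilon> by (intro order_tendstoD(2)) auto
  then show False using pf(2) by (auto simp: eventually_sequentially not_less[symmetric])
qed

lemma abs_average_diff_le:
  fixes f g :: "nat \<Rightarrow> real"
  assumes N: "N \<ge> 1" and le: "\<And>i. i \<in> {1..N} \<Longrightarrow> \<bar>f i - g i\<bar> \<le> c"
  shows "\<bar>(\<Sum>i\<in>{1..N}. f i) / real N - (\<Sum>i\<in>{1..N}. g i) / real N\<bar> \<le> c"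
proof -
  have "\<bar>(\<Sum>i\<in>{1..N}. f i) - (\<Sum>i\<in>{1..N}. g i)\<bar> \<le> (\<Sum>i\<in>{1..N}. \<bar>f i - g i\<bar>)"
    unfolding sum_subtractf[symmetric] by (rule sum_abs)
  also have "\<dots> \<le> (\<Sum>i\<in>{1..N}. c)" by (rule sum_mono) (rule le)
  finally show ?thesis
    using N by (simp add: diff_divide_distrib[symmetric] divide_le_eq mult.commute)
qed

lemma tendsto_emp_average_uniform_limit:
  fixes F :: "nat \<Rightarrow> 'p::topological_space \<Rightarrow> real"
  assumes conv: "weak_conv_on D (\<lambda>N. emp_measure N (ps N)) Q"
    and ps: "\<And>N i. i \<in> {1..N} \<Longrightarrow> ps N i \<in> D"
    and unif: "uniform_limit D F \<Phi> sequentially"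
    and \<Phi>: "\<Phi> \<in> Cb D" "\<Phi> \<in> borel_measurable borel"
  shows "(\<lambda>N. (\<Sum>i\<in>{1..N}. F N (ps N i)) / real N) \<longlonglongrightarrow> integral\<^sup>L Q \<Phi>"
proof -
  have "(\<lambda>N. integral\<^sup>L (emp_measure N (ps N)) \<Phi>) \<longlonglongrightarrow> integral\<^sup>L Q \<Phi>"
    using conv \<Phi>(1) unfolding weak_conv_on_def by (rule bspec)
  moreover have "eventually (\<lambda>N. integral\<^sup>L (emp_measure N (ps N)) \<Phi> = (\<Sum>i\<in>{1..N}. \<Phi> (ps N i)) / real N) sequentially"
    using eventually_ge_at_top[of 1] by eventually_elim (rule integral_emp_measure[OF _ \<Phi>(2)])
  ultimately have avg_\<Phi>: "(\<lambda>N. (\<Sum>i\<in>{1..N}. \<Phi> (ps N i)) / real N) \<longlonglongrightarrow> integral\<^sup>L Q \<Phi>"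
    by (rule Lim_transform_eventually)
  have "(\<lambda>N. (\<Sum>i\<in>{1..N}. F N (ps N i)) / real N - (\<Sum>i\<in>{1..N}. \<Phi> (ps N i)) / real N) \<longlonglongrightarrow> 0"
  proof (rule tendstoI)
    fix \<epsilon> :: real assume \<epsilon>: "\<epsilon> > 0"
    then have "eventually (\<lambda>N. \<forall>p\<in>D. dist (F N p) (\<Phi> p) < \<epsilon>/2) sequentially"
      using unif unfolding uniform_limit_iff by (simp only: half_gt_zero)
    with eventually_ge_at_top[of 1]
    show "eventually (\<lambda>N. dist ((\<Sum>i\<in>{1..N}. F N (ps N i)) / real N - (\<Sum>i\<in>{1..N}. \<Phi> (ps N i)) / real N) 0 < \<epsilon>) sequentially"
    proof eventually_elim
      case (elim N)
      then have "\<bar>(\<Sum>i\<in>{1..N}. F N (ps N i)) / real N - (\<Sum>i\<in>{1..N}. \<Phi> (ps N i)) / real N\<bar> \<le> \<epsilon>/2"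
        using ps by (intro abs_average_diff_le) (auto simp: dist_real_def less_imp_le)
      then show ?case using \<epsilon> by simp
    qed
  qed
  from tendsto_add[OF this avg_\<Phi>] show ?thesis by simp
qed

section \<open>Borel sets of a product space\<close>

text \<open>The library's \<open>borel_prod\<close> needs both factors to be second countable; the noise
  space below is only a metric space.\<close>

lemma sets_borel_subset_pair_borel:
  "sets (borel :: ('a::second_countable_topology \<times> 'b::topological_space) measure) \<subseteq> sets (borel \<Otimes>\<^sub>M borel)"
proof -
  obtain \<B> :: "'a set set" where \<B>: "countable \<B>" "topological_basis \<B>"
    using ex_countable_basis by blast
  have "W \<in> sets (borel \<Otimes>\<^sub>M borel)" if W: "open W" for W :: "('a \<times> 'b) set"
  proof -
    define V where "V b = \<Union>{V. open V \<and> b \<times> V \<subseteq> W}" for b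
    have "W = (\<Union>b\<in>\<B>. b \<times> V b)"
    proof (intro equalityI subsetI)
      fix w assume "w \<in> W"
      then obtain U V' where UV: "open U" "open V'" "w \<in> U \<times> V'" "U \<times> V' \<subseteq> W"
        using open_prod_elim[OF W] by blast
      then obtain b where b: "b \<in> \<B>" "fst w \<in> b" "b \<subseteq> U"
        using topological_basisE[OF \<B>(2) UV(1), of "fst w"] by (auto simp: mem_Times_iff)
      have "b \<times> V' \<subseteq> W" using b(3) UV(4) by blast
      with UV have "snd w \<in> V b" unfolding V_def by (auto simp: mem_Times_iff)
      with b show "w \<in> (\<Union>b\<in>\<B>. b \<times> V b)" by (auto simp: mem_Times_iff)
    qed (auto simp: V_def)
    also have "\<dots> \<in> sets (borel \<Otimes>\<^sub>M borel)"
      using \<B> by (intro sets.countable_UN'' pair_measureI)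
        (auto simp: V_def topological_basis_open intro!: borel_open open_Union)
    finally show ?thesis .
  qed
  then show ?thesis
    unfolding sets_borel by (intro sets.sigma_sets_subset') (auto simp: space_pair_measure)
qed

lemma borel_measurable_pair_borelI:
  fixes f :: "'a::second_countable_topology \<times> 'b::topological_space \<Rightarrow> 'c::topological_space"
  assumes "f \<in> borel_measurable borel"
  shows "f \<in> borel_measurable (borel \<Otimes>\<^sub>M borel)"
  using sets_borel_subset_pair_borel _ assms by (rule borel_measurable_subalgebra) (simp add: space_pair_measure)

section \<open>Concentration for triangular arrays\<close>

lemma (in prob_space) prob_abs_sum_deviation_ge_le:
  fixes X :: "nat \<Rightarrow> 'a \<Rightarrow> real"
  assumes indep: "indep_vars (\<lambda>_. borel) X {1..N}"
    and bounded: "\<And>i. i \<in> {1..N} \<Longrightarrow> AE \<omega> in M. \<bar>X i \<omega>\<bar> \<le> B"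
    and N: "N \<ge> 1" and \<epsilon>: "\<epsilon> > 0" and B: "B > 0"
  shows "prob {\<omega>\<in>space M. \<epsilon> * real N \<le> \<bar>(\<Sum>i\<in>{1..N}. X i \<omega>) - (\<Sum>i\<in>{1..N}. expectation (X i))\<bar>}
           \<le> 2 * exp (- (\<epsilon>\<^sup>2 / (2 * B\<^sup>2))) ^ N"
proof -
  interpret Hoeffding_ineq M "{1..N}" X "\<lambda>_. -B" "\<lambda>_. B" "\<Sum>i\<in>{1..N}. expectation (X i)"
  proof unfold_locales
    fix i assume "i \<in> {1..N}"
    from bounded[OF this] show "AE \<omega> in M. X i \<omega> \<in> {-B..B}"
      by eventually_elim (simp add: abs_le_iff)
  qed (use indep in simp_all)
  have sum_sq: "(\<Sum>i\<in>{1..N}. (B - - B)\<^sup>2) = real N * (4 * B\<^sup>2)"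
    by (simp add: power2_eq_square algebra_simps)
  have "prob {\<omega>\<in>space M. \<epsilon> * real N \<le> \<bar>(\<Sum>i\<in>{1..N}. X i \<omega>) - (\<Sum>i\<in>{1..N}. expectation (X i))\<bar>}
        \<le> 2 * exp (-2 * (\<epsilon> * real N)\<^sup>2 / (\<Sum>i\<in>{1..N}. (B - - B)\<^sup>2))"
    using \<epsilon> N B by (intro Hoeffding_ineq_abs_ge) (auto simp: sum_sq)
  also have "-2 * (\<epsilon> * real N)\<^sup>2 / (\<Sum>i\<in>{1..N}. (B - - B)\<^sup>2) = real N * (- (\<epsilon>\<^sup>2 / (2 * B\<^sup>2)))"
    unfolding sum_sq using N B by (simp add: field_simps power2_eq_square)
  also have "exp (real N * (- (\<epsilon>\<^sup>2 / (2 * B\<^sup>2)))) = exp (- (\<epsilon>\<^sup>2 / (2 * B\<^sup>2))) ^ N"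
    by (rule exp_of_nat_mult)
  finally show ?thesis .
qed

lemma (in prob_space) AE_eventually_abs_sum_deviation_less:
  fixes X :: "nat \<Rightarrow> nat \<Rightarrow> 'a \<Rightarrow> real"
  assumes indep: "\<And>N. indep_vars (\<lambda>_. borel) (X N) {1..N}"
    and bounded: "\<And>N i. i \<in> {1..N} \<Longrightarrow> AE \<omega> in M. \<bar>X N i \<omega>\<bar> \<le> B"
    and \<epsilon>: "\<epsilon> > 0"
  shows "AE \<omega> in M. eventually (\<lambda>N.
           \<bar>(\<Sum>i\<in>{1..N}. X N i \<omega>) - (\<Sum>i\<in>{1..N}. expectation (X N i))\<bar> < \<epsilon> * real N) sequentially"
proof -
  define B' where "B' = max B 1"
  have B': "B' > 0" "\<And>N i. i \<in> {1..N} \<Longrightarrow> AE \<omega> in M. \<bar>X N i \<omega>\<bar> \<le> B'"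
    by (simp add: B'_def) (use bounded in \<open>force simp: B'_def elim: eventually_mono\<close>)
  define dev where "dev N \<omega> = \<bar>(\<Sum>i\<in>{1..N}. X N i \<omega>) - (\<Sum>i\<in>{1..N}. expectation (X N i))\<bar>" for N \<omega>
  define A where "A N = {\<omega>\<in>space M. \<epsilon> * real N \<le> dev N \<omega>}" for N
  have "X N i \<in> borel_measurable M" if "i \<in> {1..N}" for N i
    using indep[of N] that by (simp add: indep_vars_def)
  then have "dev N \<in> borel_measurable M" for N
    unfolding dev_def by (intro borel_measurable_abs borel_measurable_diff borel_measurable_sum) auto
  then have A_sets: "A N \<in> sets M" for N
    unfolding A_def by measurable
  define c where "c = exp (- (\<epsilon>\<^sup>2 / (2 * B'\<^sup>2)))"
  have "summable (\<lambda>N. measure M (A N))"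
  proof (rule summable_comparison_test'[where N=1])
    show "summable (\<lambda>N. 2 * c ^ N)"
      using \<epsilon> B' by (intro summable_mult summable_geometric) (simp add: c_def)
    fix N :: nat assume "N \<ge> 1"
    then show "norm (measure M (A N)) \<le> 2 * c ^ N"
      using prob_abs_sum_deviation_ge_le[OF indep B'(2) _ \<epsilon> B'(1)] by (simp add: A_def dev_def c_def)
  qed
  then have "AE \<omega> in M. eventually (\<lambda>N. \<omega> \<in> space M - A N) sequentially"
    using A_sets by (intro borel_cantelli_AE1) (auto simp: emeasure_eq_measure)
  then show ?thesis
    by eventually_elim (auto simp: A_def dev_def not_le elim!: eventually_mono)
qed

lemma (in prob_space) AE_average_deviation_tendsto_zero:
  fixes X :: "nat \<Rightarrow> nat \<Rightarrow> 'a \<Rightarrow> real"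
  assumes indep: "\<And>N. indep_vars (\<lambda>_. borel) (X N) {1..N}"
    and bounded: "\<And>N i. i \<in> {1..N} \<Longrightarrow> AE \<omega> in M. \<bar>X N i \<omega>\<bar> \<le> B"
  shows "AE \<omega> in M. (\<lambda>N. (\<Sum>i\<in>{1..N}. X N i \<omega>) / real N - (\<Sum>i\<in>{1..N}. expectation (X N i)) / real N)
           \<longlonglongrightarrow> 0"
proof -
  have "AE \<omega> in M. \<forall>k::nat. eventually (\<lambda>N.
      \<bar>(\<Sum>i\<in>{1..N}. X N i \<omega>) - (\<Sum>i\<in>{1..N}. expectation (X N i))\<bar> < inverse (Suc k) * real N) sequentially"
    unfolding AE_all_countable
    by (intro allI AE_eventually_abs_sum_deviation_less[OF indep bounded]) simp_all
  then show ?thesis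
  proof eventually_elim
    case (elim \<omega>)
    show ?case
    proof (rule tendstoI)
      fix \<delta> :: real assume "\<delta> > 0"
      then obtain k where k: "inverse (Suc k) < \<delta>" using reals_Archimedean by blast
      from elim[rule_format, of k] eventually_ge_at_top[of 1]
      show "eventually (\<lambda>N. dist ((\<Sum>i\<in>{1..N}. X N i \<omega>) / real N - (\<Sum>i\<in>{1..N}. expectation (X N i)) / real N) 0 < \<delta>) sequentially"
      proof eventually_elim
        case (elim N)
        have "inverse (Suc k) * real N < \<delta> * real N"
          using k elim(2) by (intro mult_strict_right_mono) auto
        with elim(1) have "\<bar>(\<Sum>i\<in>{1..N}. X N i \<omega>) - (\<Sum>i\<in>{1..N}. expectation (X N i))\<bar> < \<delta> * real N"
          by linarith
        with elim(2) show ?case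
          by (simp add: dist_real_def diff_divide_distrib[symmetric] divide_less_eq)
      qed
    qed
  qed
qed

section \<open>The random transition\<close>

locale random_step = prob_space M
  for M :: "'w measure" +
  fixes S :: "'x::euclidean_space set" and A :: "'a::euclidean_space set"
    and D :: "('x \<times> 'a) set" and T :: "'x \<Rightarrow> 'a \<Rightarrow> 'x measure \<Rightarrow> 'z::metric_space \<Rightarrow> 'z \<Rightarrow> 'x"
    and Zs :: "nat \<Rightarrow> 'w \<Rightarrow> 'z" and z0 :: 'z
  assumes S_compact: "compact S" and D_compact: "compact D" and D_subset: "D \<subseteq> S \<times> A"
    and T_continuous: "continuous_map
       (prod_topology (top_of_set S) (prod_topology (top_of_set A)
         (prod_topology (weak_topology S) (prod_topology euclidean euclidean))))
       (top_of_set S) (\<lambda>(x, a, \<mu>, z, z'). T x a \<mu> z z')"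
    and Zs_indep: "indep_vars (\<lambda>_. borel) Zs UNIV"
    and Zs_identically_distributed: "\<And>i. distr M borel (Zs i) = distr M borel (Zs 1)"
begin

definition Tstep :: "'x \<times> 'a \<Rightarrow> 'x measure \<Rightarrow> 'z \<Rightarrow> 'x" where
  "Tstep p \<nu> z = T (fst p) (snd p) \<nu> z z0"

definition mean_step :: "'x measure \<Rightarrow> ('x \<Rightarrow> real) \<Rightarrow> 'x \<times> 'a \<Rightarrow> real" where
  "mean_step \<nu> g p = expectation (\<lambda>\<omega>. g (Tstep p \<nu> (Zs 1 \<omega>)))"

lemma S_borel: "S \<in> sets borel"
  using S_compact by (simp add: compact_imp_closed)

lemma D_borel: "D \<in> sets borel"
  using D_compact by (simp add: compact_imp_closed)

lemma Zs_measurable: "Zs i \<in> borel_measurable M"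
  using Zs_indep by (simp add: indep_vars_def)

lemma Tstep_in:
  assumes "p \<in> D" "\<nu> \<in> Prob_on S"
  shows "Tstep p \<nu> z \<in> S"
proof -
  have "(fst p, snd p, \<nu>, z, z0) \<in> topspace (prod_topology (top_of_set S) (prod_topology (top_of_set A)
         (prod_topology (weak_topology S) (prod_topology euclidean euclidean))))"
    using assms D_subset by (auto simp: topspace_weak_topology)
  from funcset_mem[OF continuous_map_funspace[OF T_continuous] this] show ?thesis
    by (simp add: Tstep_def)
qed

lemma tendsto_Tstep:
  assumes "(pf \<longlongrightarrow> p) F" "eventually (\<lambda>t. pf t \<in> D) F" "p \<in> D"
    and "limitin (weak_topology S) \<nu>f \<nu> F" "(zf \<longlongrightarrow> z) F"
  shows "((\<lambda>t. Tstep (pf t) (\<nu>f t) (zf t)) \<longlongrightarrow> Tstep p \<nu> z) F"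
proof -
  have "limitin (top_of_set S) (\<lambda>t. fst (pf t)) (fst p) F"
    "limitin (top_of_set A) (\<lambda>t. snd (pf t)) (snd p) F"
    using assms(1-3) D_subset
    by (auto simp: limitin_subtopology intro!: tendsto_fst tendsto_snd elim!: eventually_mono)
  with assms(4,5) have "limitin (prod_topology (top_of_set S) (prod_topology (top_of_set A)
         (prod_topology (weak_topology S) (prod_topology euclidean euclidean))))
         (\<lambda>t. (fst (pf t), snd (pf t), \<nu>f t, zf t, z0)) (fst p, snd p, \<nu>, z, z0) F"
    by (simp add: limitin_pairwise o_def tendsto_Pair)
  from continuous_map_limit[OF T_continuous this] show ?thesis
    by (simp add: o_def Tstep_def limitin_subtopology)
qed

lemma continuous_on_Tstep_pair:
  assumes "\<nu> \<in> Prob_on S"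
  shows "continuous_on (D \<times> UNIV) (\<lambda>q. Tstep (fst q) \<nu> (snd q))"
  unfolding continuous_on_def
proof (intro ballI)
  fix q assume "q \<in> D \<times> (UNIV :: 'z set)"
  then show "((\<lambda>q. Tstep (fst q) \<nu> (snd q)) \<longlongrightarrow> Tstep (fst q) \<nu> (snd q)) (at q within D \<times> UNIV)"
    using assms
    by (intro tendsto_Tstep tendsto_fst tendsto_snd tendsto_ident_at)
      (auto simp: eventually_at_topological topspace_weak_topology)
qed

lemma continuous_on_comp_Tstep:
  fixes g :: "'x \<Rightarrow> real"
  assumes "p \<in> D" "\<nu> \<in> Prob_on S" "continuous_on S g"
  shows "continuous_on UNIV (\<lambda>z. g (Tstep p \<nu> z))"
proof -
  have "continuous_on UNIV (\<lambda>z. Tstep (fst (p, z)) \<nu> (snd (p, z)))"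
    using assms(1) by (intro continuous_on_compose2[OF continuous_on_Tstep_pair[OF assms(2)]]
        continuous_intros) auto
  then show ?thesis
    using Tstep_in[OF assms(1,2)] by (intro continuous_on_compose2[OF assms(3)]) auto
qed

lemma measurable_comp_Tstep:
  fixes g :: "'x \<Rightarrow> real"
  assumes "p \<in> D" "\<nu> \<in> Prob_on S" "continuous_on S g"
  shows "(\<lambda>\<omega>. g (Tstep p \<nu> (Zs i \<omega>))) \<in> borel_measurable M"
  using borel_measurable_continuous_onI[OF continuous_on_comp_Tstep[OF assms]] Zs_measurable
  by (rule measurable_compose[rotated])

lemma bounded_on_S:
  fixes g :: "'x \<Rightarrow> real"
  assumes "continuous_on S g"
  obtains B where "\<And>x. x \<in> S \<Longrightarrow> \<bar>g x\<bar> \<le> B"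
  using compact_imp_bounded[OF compact_continuous_image[OF assms S_compact]]
  by (auto simp: bounded_iff intro: that)

lemma integrable_comp_Tstep:
  fixes g :: "'x \<Rightarrow> real"
  assumes "p \<in> D" "\<nu> \<in> Prob_on S" "continuous_on S g"
  shows "integrable M (\<lambda>\<omega>. g (Tstep p \<nu> (Zs i \<omega>)))"
proof -
  obtain B where "\<And>x. x \<in> S \<Longrightarrow> \<bar>g x\<bar> \<le> B" using bounded_on_S[OF assms(3)] by blast
  then show ?thesis
    using Tstep_in[OF assms(1,2)] by (intro integrable_const_bound[where B=B] measurable_comp_Tstep[OF assms]) auto
qed

lemma expectation_comp_Tstep:
  assumes "p \<in> D" "\<nu> \<in> Prob_on S" "continuous_on S g"
  shows "expectation (\<lambda>\<omega>. g (Tstep p \<nu> (Zs i \<omega>))) = mean_step \<nu> g p"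
proof -
  have g: "(\<lambda>z. g (Tstep p \<nu> z)) \<in> borel_measurable borel"
    by (rule borel_measurable_continuous_onI[OF continuous_on_comp_Tstep[OF assms]])
  have "expectation (\<lambda>\<omega>. g (Tstep p \<nu> (Zs i \<omega>))) = (\<integral>z. g (Tstep p \<nu> z) \<partial>distr M borel (Zs i))"
    using g Zs_measurable by (simp add: integral_distr)
  also have "\<dots> = mean_step \<nu> g p"
    using g Zs_measurable by (simp add: Zs_identically_distributed[of i] integral_distr mean_step_def)
  finally show ?thesis .
qed

lemma abs_mean_step_le:
  assumes "p \<in> D" "\<nu> \<in> Prob_on S" "continuous_on S g" "\<And>x. x \<in> S \<Longrightarrow> \<bar>g x\<bar> \<le> B"
  shows "\<bar>mean_step \<nu> g p\<bar> \<le> B"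
proof -
  have "\<bar>mean_step \<nu> g p\<bar> \<le> expectation (\<lambda>\<omega>. \<bar>g (Tstep p \<nu> (Zs 1 \<omega>))\<bar>)"
    unfolding mean_step_def by (rule integral_abs_bound)
  also have "\<dots> \<le> expectation (\<lambda>_. B)"
    using assms Tstep_in integrable_comp_Tstep[OF assms(1-3)] by (intro integral_mono) auto
  finally show ?thesis by (simp add: prob_space)
qed

lemma tendsto_mean_step:
  assumes pf: "pf \<longlonglongrightarrow> p" "\<And>n. pf n \<in> D" "p \<in> D"
    and \<nu>f: "limitin (weak_topology S) \<nu>f \<nu> sequentially" and g: "continuous_on S g"
  shows "(\<lambda>n. mean_step (\<nu>f n) g (pf n)) \<longlonglongrightarrow> mean_step \<nu> g p"
proof -
  obtain B where B: "\<And>x. x \<in> S \<Longrightarrow> \<bar>g x\<bar> \<le> B" using bounded_on_S[OF g] by blast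
  have \<nu>: "\<nu> \<in> Prob_on S" using limitin_topspace[OF \<nu>f] by (simp add: topspace_weak_topology)
  \<comment> \<open>Only eventually is \<open>\<nu>f n\<close> in \<open>Prob_on S\<close> (an empirical measure with N = 0 is not),
    so dominated convergence is applied to the sequence shifted by k.\<close>
  obtain k where k: "\<And>n. n \<ge> k \<Longrightarrow> \<nu>f n \<in> Prob_on S"
    using limitin_weak_topology_eventually_Prob_on[OF \<nu>f] by (auto simp: eventually_sequentially)
  have "(\<lambda>n. mean_step (\<nu>f (n + k)) g (pf (n + k))) \<longlonglongrightarrow> mean_step \<nu> g p"
    unfolding mean_step_def
  proof (rule integral_dominated_convergence[where w="\<lambda>_. B"])
    show "(\<lambda>\<omega>. g (Tstep p \<nu> (Zs 1 \<omega>))) \<in> borel_measurable M"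
      by (rule measurable_comp_Tstep[OF pf(3) \<nu> g])
    show "(\<lambda>\<omega>. g (Tstep (pf (n + k)) (\<nu>f (n + k)) (Zs 1 \<omega>))) \<in> borel_measurable M" for n
      using k pf(2) g by (intro measurable_comp_Tstep) auto
    show "AE \<omega> in M. norm (g (Tstep (pf (n + k)) (\<nu>f (n + k)) (Zs 1 \<omega>))) \<le> B" for n
      using k pf(2) B Tstep_in by auto
    have shifted: "limitin (weak_topology S) (\<lambda>n. \<nu>f (n + k)) \<nu> sequentially"
      using limitin_subsequence[OF _ \<nu>f, of "\<lambda>n. n + k"] by (simp add: strict_mono_def o_def)
    show "AE \<omega> in M. (\<lambda>n. g (Tstep (pf (n + k)) (\<nu>f (n + k)) (Zs 1 \<omega>))) \<longlonglongrightarrow> g (Tstep p \<nu> (Zs 1 \<omega>))"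
    proof (rule AE_I2)
      fix \<omega>
      have "(\<lambda>n. Tstep (pf (n + k)) (\<nu>f (n + k)) (Zs 1 \<omega>)) \<longlonglongrightarrow> Tstep p \<nu> (Zs 1 \<omega>)"
        using pf(2) by (intro tendsto_Tstep[OF LIMSEQ_ignore_initial_segment[OF pf(1)] _ pf(3) shifted]) auto
      then show "(\<lambda>n. g (Tstep (pf (n + k)) (\<nu>f (n + k)) (Zs 1 \<omega>))) \<longlonglongrightarrow> g (Tstep p \<nu> (Zs 1 \<omega>))"
        using k pf \<nu> Tstep_in by (intro continuous_on_tendsto_compose[OF g]) auto
    qed
  qed simp
  then show ?thesis by (rule LIMSEQ_offset)
qed

lemma continuous_on_mean_step:
  assumes "\<nu> \<in> Prob_on S" "continuous_on S g"
  shows "continuous_on D (mean_step \<nu> g)"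
proof (rule continuous_on_sequentiallyI)
  fix pf p assume "\<forall>n. pf n \<in> D" "p \<in> D" "pf \<longlonglongrightarrow> p"
  then show "(\<lambda>n. mean_step \<nu> g (pf n)) \<longlonglongrightarrow> mean_step \<nu> g p"
    using assms by (intro tendsto_mean_step[where \<nu>f="\<lambda>_. \<nu>"]) (auto simp: topspace_weak_topology)
qed

lemma uniform_limit_mean_step:
  assumes \<nu>s: "limitin (weak_topology S) \<nu>s \<nu> sequentially" and g: "continuous_on S g"
  shows "uniform_limit D (\<lambda>n. mean_step (\<nu>s n) g) (mean_step \<nu> g) sequentially"
proof (rule uniform_limit_compactI[OF D_compact])
  show "continuous_on D (mean_step \<nu> g)"
    using limitin_topspace[OF \<nu>s] g by (intro continuous_on_mean_step) (auto simp: topspace_weak_topology)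
  fix r :: "nat \<Rightarrow> nat" and pf p assume "strict_mono r" "\<And>n. pf n \<in> D" "pf \<longlonglongrightarrow> p" "p \<in> D"
  then show "(\<lambda>n. mean_step (\<nu>s (r n)) g (pf n)) \<longlonglongrightarrow> mean_step \<nu> g p"
    using limitin_subsequence[OF _ \<nu>s] g by (intro tendsto_mean_step) (auto simp: o_def)
qed

end

section \<open>Empirical initial data\<close>

locale empirical_random_step = random_step M S A D T Zs z0
  for M :: "'w measure" and S :: "'x::euclidean_space set" and A :: "'a::euclidean_space set"
    and D T and Zs :: "nat \<Rightarrow> 'w \<Rightarrow> 'z::metric_space" and z0 +
  fixes Q :: "('x \<times> 'a) measure" and ps :: "nat \<Rightarrow> nat \<Rightarrow> 'x \<times> 'a"
  assumes Q_in: "Q \<in> Prob_on D"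
    and ps_in: "\<And>N i. i \<in> {1..N} \<Longrightarrow> ps N i \<in> D"
    and Q_conv: "weak_conv_on D (\<lambda>N. emp_measure N (ps N)) Q"
begin

definition mu_lim :: "'x measure" where
  "mu_lim = distr Q borel fst"

definition mu_emp :: "nat \<Rightarrow> 'x measure" where
  "mu_emp N = emp_measure N (fst \<circ> ps N)"

lemma sets_Q: "sets Q = sets borel"
  using Q_in by (rule Prob_on_sets)

lemma measurable_Q: "measurable Q N = measurable borel N"
  using sets_Q by (rule measurable_cong_sets) simp

lemma space_Q: "space Q = UNIV"
  using sets_eq_imp_space_eq[OF sets_Q] by simp

lemma D_nonempty: "D \<noteq> {}"
  using Q_in by (auto simp: Prob_on_def)

lemma mu_lim_in: "mu_lim \<in> Prob_on S"
proof -
  interpret Q: prob_space Q using Q_in by (rule Prob_on_prob_space)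
  have fst_meas: "fst \<in> measurable Q borel"
    unfolding measurable_Q by (rule borel_measurable_continuous_onI[OF continuous_on_fst[OF continuous_on_id]])
  have "emeasure Q D \<le> emeasure Q (fst -` S)"
    using D_subset measurable_sets[OF fst_meas S_borel] sets_Q D_borel
    by (intro emeasure_mono) (auto simp: space_Q)
  then have "emeasure mu_lim S = 1"
    using Q_in antisym[OF Q.emeasure_le_1] unfolding mu_lim_def
    by (simp add: emeasure_distr[OF fst_meas S_borel] space_Q Prob_on_def)
  then show ?thesis
    unfolding Prob_on_def by (simp add: mu_lim_def Q.prob_space_distr[OF fst_meas])
qed

lemma fst_ps_in: "i \<in> {1..N} \<Longrightarrow> fst (ps N i) \<in> S"
  using subsetD[OF D_subset ps_in] by (simp add: mem_Times_iff)

lemma mu_emp_in: "N \<ge> 1 \<Longrightarrow> mu_emp N \<in> Prob_on S"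
  unfolding mu_emp_def using fst_ps_in S_borel by (intro emp_measure_in_Prob_on) auto

lemma limitin_mu_emp: "limitin (weak_topology S) mu_emp mu_lim sequentially"
proof (rule limitin_weak_topologyI)
  show "eventually (\<lambda>N. mu_emp N \<in> Prob_on S) sequentially"
    using eventually_ge_at_top[of 1] by eventually_elim (rule mu_emp_in)
  show "mu_lim \<in> Prob_on S" by (rule mu_lim_in)
  fix f assume "f \<in> Cb S"
  moreover have "weak_conv_on S (\<lambda>N. distr (emp_measure N (ps N)) borel fst) mu_lim"
    unfolding mu_lim_def using D_subset sets_Q
    by (intro weak_conv_on_distr[OF Q_conv] continuous_on_fst continuous_on_id) auto
  ultimately have "(\<lambda>N. integral\<^sup>L (distr (emp_measure N (ps N)) borel fst) f) \<longlonglongrightarrow> integral\<^sup>L mu_lim f"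
    unfolding weak_conv_on_def by blast
  moreover have "eventually (\<lambda>N. integral\<^sup>L (distr (emp_measure N (ps N)) borel fst) f
      = integral\<^sup>L (mu_emp N) f) sequentially"
    using eventually_ge_at_top[of 1]
    by eventually_elim (simp add: mu_emp_def emp_measure_comp borel_measurable_continuous_onI continuous_on_fst)
  ultimately show "(\<lambda>N. integral\<^sup>L (mu_emp N) f) \<longlonglongrightarrow> integral\<^sup>L mu_lim f"
    by (rule Lim_transform_eventually)
qed

lemma borel_measurable_indicator_mean_step:
  assumes "continuous_on S g"
  shows "(\<lambda>p. indicator D p * mean_step mu_lim g p) \<in> borel_measurable borel"
  using borel_measurable_continuous_on_indicator[OF D_borel continuous_on_mean_step[OF mu_lim_in assms]]
  by simp

lemma tendsto_average_mean_step:
  assumes g: "continuous_on S g"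
  shows "(\<lambda>N. (\<Sum>i\<in>{1..N}. mean_step (mu_emp N) g (ps N i)) / real N)
           \<longlonglongrightarrow> (\<integral>p. indicator D p * mean_step mu_lim g p \<partial>Q)"
proof (rule tendsto_emp_average_uniform_limit[OF Q_conv ps_in])
  let ?\<Phi> = "\<lambda>p. indicator D p * mean_step mu_lim g p"
  have cont: "continuous_on D (mean_step mu_lim g)"
    by (rule continuous_on_mean_step[OF mu_lim_in g])
  show "uniform_limit D (\<lambda>N. mean_step (mu_emp N) g) ?\<Phi> sequentially"
    using uniform_limit_mean_step[OF limitin_mu_emp g]
      uniform_limit_cong'[of D "\<lambda>N. mean_step (mu_emp N) g" "\<lambda>N. mean_step (mu_emp N) g"
        "mean_step mu_lim g" ?\<Phi> sequentially] by simp
  obtain B where "\<And>x. x \<in> S \<Longrightarrow> \<bar>g x\<bar> \<le> B" using bounded_on_S[OF g] by blast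
  then have "\<forall>p\<in>D. \<bar>?\<Phi> p\<bar> \<le> B"
    using abs_mean_step_le[OF _ mu_lim_in g] by simp
  moreover have "continuous_on D ?\<Phi>"
    using cont by (rule continuous_on_eq) simp
  ultimately show "?\<Phi> \<in> Cb D"
    by (auto simp: Cb_def bounded_iff)
  show "?\<Phi> \<in> borel_measurable borel"
    by (rule borel_measurable_indicator_mean_step[OF g])
qed

lemma AE_average_Tstep_deviation:
  assumes g: "continuous_on S g"
  shows "AE \<omega> in M. (\<lambda>N. (\<Sum>i\<in>{1..N}. g (Tstep (ps N i) (mu_emp N) (Zs i \<omega>))) / real N
           - (\<Sum>i\<in>{1..N}. mean_step (mu_emp N) g (ps N i)) / real N) \<longlonglongrightarrow> 0"
proof -
  obtain B where B: "\<And>x. x \<in> S \<Longrightarrow> \<bar>g x\<bar> \<le> B" using bounded_on_S[OF g] by blast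
  have ps_mu: "ps N i \<in> D" "mu_emp N \<in> Prob_on S" if "i \<in> {1..N}" for N i
    using that ps_in mu_emp_in by auto
  have "(\<Sum>i\<in>{1..N}. expectation (\<lambda>\<omega>. g (Tstep (ps N i) (mu_emp N) (Zs i \<omega>))))
      = (\<Sum>i\<in>{1..N}. mean_step (mu_emp N) g (ps N i))" for N
    using ps_mu g by (intro sum.cong expectation_comp_Tstep) auto
  moreover have "AE \<omega> in M. (\<lambda>N. (\<Sum>i\<in>{1..N}. g (Tstep (ps N i) (mu_emp N) (Zs i \<omega>))) / real N
      - (\<Sum>i\<in>{1..N}. expectation (\<lambda>\<omega>. g (Tstep (ps N i) (mu_emp N) (Zs i \<omega>)))) / real N) \<longlonglongrightarrow> 0"
  proof (rule AE_average_deviation_tendsto_zero)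
    fix N
    show "indep_vars (\<lambda>_. borel) (\<lambda>i \<omega>. g (Tstep (ps N i) (mu_emp N) (Zs i \<omega>))) {1..N}"
      using ps_mu g
      by (intro indep_vars_compose2[OF indep_vars_subset[OF Zs_indep]] borel_measurable_continuous_onI
          continuous_on_comp_Tstep) auto
    fix i assume "i \<in> {1..N}"
    then show "AE \<omega> in M. \<bar>g (Tstep (ps N i) (mu_emp N) (Zs i \<omega>))\<bar> \<le> B"
      using ps_mu B Tstep_in by auto
  qed
  ultimately show ?thesis by simp
qed

text \<open>Off D the value is irrelevant, since Q is concentrated on D; it only has to lie in S.\<close>

definition Tstep_pair :: "('x \<times> 'a) \<times> 'w \<Rightarrow> 'x" where
  "Tstep_pair q = (if fst q \<in> D then Tstep (fst q) mu_lim (Zs 1 (snd q)) else (SOME x. x \<in> S))"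

lemma Tstep_pair_in: "Tstep_pair q \<in> S"
proof -
  have "S \<noteq> {}" using D_nonempty D_subset by auto
  then show ?thesis using Tstep_in[OF _ mu_lim_in] by (auto simp: Tstep_pair_def some_in_eq)
qed

lemma measurable_Tstep_pair: "Tstep_pair \<in> borel_measurable (Q \<Otimes>\<^sub>M M)"
proof -
  let ?F = "\<lambda>u :: ('x \<times> 'a) \<times> 'z. if u \<in> D \<times> UNIV then Tstep (fst u) mu_lim (snd u) else (SOME x. x \<in> S)"
  have "D \<times> UNIV \<in> sets borel" using D_compact by (intro borel_closed closed_Times) (auto simp: compact_imp_closed)
  then have "?F \<in> borel_measurable borel"
    by (intro borel_measurable_continuous_on_if continuous_on_Tstep_pair mu_lim_in continuous_on_const)
  then have "?F \<in> borel_measurable (borel \<Otimes>\<^sub>M borel)"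
    by (rule borel_measurable_pair_borelI)
  moreover have "(\<lambda>q. (fst q, Zs 1 (snd q))) \<in> measurable (Q \<Otimes>\<^sub>M M) (borel \<Otimes>\<^sub>M borel)"
    using measurable_fst[of Q M] Zs_measurable
    by (intro measurable_Pair) (auto simp: measurable_cong_sets[OF refl sets_Q])
  ultimately have "(\<lambda>q. ?F (fst q, Zs 1 (snd q))) \<in> borel_measurable (Q \<Otimes>\<^sub>M M)"
    by (rule measurable_compose[rotated])
  moreover have "(\<lambda>q. ?F (fst q, Zs 1 (snd q))) = Tstep_pair"
    by (rule ext) (simp add: Tstep_pair_def)
  ultimately show ?thesis by simp
qed

lemma Ttilde_eq_distr: "Ttilde T M (Zs 1) D mu_lim Q z0 = distr (Q \<Otimes>\<^sub>M M) borel Tstep_pair"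
proof -
  let ?R = "distr (Q \<Otimes>\<^sub>M M) borel Tstep_pair"
  have "Ttilde T M (Zs 1) D mu_lim Q z0 = measure_of UNIV (sets borel) (emeasure ?R)"
    unfolding Ttilde_def
  proof (rule measure_of_eq)
    fix B :: "'x set" assume "B \<in> sigma_sets UNIV (sets borel)"
    then have B: "B \<in> sets borel" by (simp add: sets.sigma_sets_eq[of borel, simplified])
    define X where "X = Tstep_pair -` B \<inter> space (Q \<Otimes>\<^sub>M M)"
    have "X \<in> sets (Q \<Otimes>\<^sub>M M)" unfolding X_def by (rule measurable_sets[OF measurable_Tstep_pair B])
    then have "emeasure ?R B = (\<integral>\<^sup>+p. emeasure M (Pair p -` X) \<partial>Q)"
      unfolding X_def by (simp add: emeasure_distr[OF measurable_Tstep_pair B] emeasure_pair_measure_alt)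
    also have "\<dots> = (\<integral>\<^sup>+p\<in>D. emeasure M {\<omega>\<in>space M. T (fst p) (snd p) mu_lim (Zs 1 \<omega>) z0 \<in> B} \<partial>Q)"
      using AE_in_Prob_on[OF Q_in D_borel]
    proof (intro nn_integral_cong_AE, eventually_elim)
      case (elim p)
      then have "Pair p -` X = {\<omega>\<in>space M. T (fst p) (snd p) mu_lim (Zs 1 \<omega>) z0 \<in> B}"
        by (auto simp: X_def Tstep_pair_def Tstep_def space_pair_measure space_Q)
      with elim show ?case by simp
    qed
    finally show "(\<integral>\<^sup>+p\<in>D. emeasure M {\<omega>\<in>space M. T (fst p) (snd p) mu_lim (Zs 1 \<omega>) z0 \<in> B} \<partial>Q)
        = emeasure ?R B" ..
  qed auto
  also have "\<dots> = ?R" using measure_of_of_measure[of ?R] by simp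
  finally show ?thesis .
qed

lemma Ttilde_in: "Ttilde T M (Zs 1) D mu_lim Q z0 \<in> Prob_on S"
proof -
  interpret Q: prob_space Q using Q_in by (rule Prob_on_prob_space)
  interpret QM: prob_space "Q \<Otimes>\<^sub>M M" by (rule prob_space_pair) unfold_locales
  have "Tstep_pair -` S \<inter> space (Q \<Otimes>\<^sub>M M) = space (Q \<Otimes>\<^sub>M M)"
    using Tstep_pair_in by auto
  then have "emeasure (distr (Q \<Otimes>\<^sub>M M) borel Tstep_pair) S = 1"
    by (simp add: emeasure_distr[OF measurable_Tstep_pair S_borel] QM.emeasure_space_1)
  then show ?thesis
    unfolding Ttilde_eq_distr Prob_on_def by (simp add: QM.prob_space_distr[OF measurable_Tstep_pair])
qed

lemma integral_Ttilde:
  assumes f: "f \<in> borel_measurable borel" "continuous_on S f"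
  shows "integral\<^sup>L (Ttilde T M (Zs 1) D mu_lim Q z0) f = (\<integral>p. indicator D p * mean_step mu_lim f p \<partial>Q)"
proof -
  interpret Q: prob_space Q using Q_in by (rule Prob_on_prob_space)
  interpret QM: pair_sigma_finite Q M by unfold_locales
  interpret P: prob_space "Q \<Otimes>\<^sub>M M" by (rule prob_space_pair) unfold_locales
  obtain B where B: "\<And>x. x \<in> S \<Longrightarrow> \<bar>f x\<bar> \<le> B" using bounded_on_S[OF f(2)] by blast
  have meas: "(\<lambda>q. f (Tstep_pair q)) \<in> borel_measurable (Q \<Otimes>\<^sub>M M)"
    by (rule measurable_compose[OF measurable_Tstep_pair f(1)])
  have "integral\<^sup>L (Ttilde T M (Zs 1) D mu_lim Q z0) f = (\<integral>q. f (Tstep_pair q) \<partial>(Q \<Otimes>\<^sub>M M))"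
    unfolding Ttilde_eq_distr by (rule integral_distr[OF measurable_Tstep_pair f(1)])
  also have "\<dots> = (\<integral>p. \<integral>\<omega>. f (Tstep_pair (p, \<omega>)) \<partial>M \<partial>Q)"
    using meas B Tstep_pair_in
    by (intro QM.integral_fst'[symmetric] P.integrable_const_bound[where B=B]) auto
  also have "\<dots> = (\<integral>p. indicator D p * mean_step mu_lim f p \<partial>Q)"
  proof (rule integral_cong_AE)
    show "(\<lambda>p. \<integral>\<omega>. f (Tstep_pair (p, \<omega>)) \<partial>M) \<in> borel_measurable Q"
      using borel_measurable_lebesgue_integral[of "\<lambda>p \<omega>. f (Tstep_pair (p, \<omega>))" Q] meas by simp
    show "(\<lambda>p. indicator D p * mean_step mu_lim f p) \<in> borel_measurable Q"
      using borel_measurable_indicator_mean_step[OF f(2)] by (simp add: measurable_Q)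
    show "AE p in Q. (\<integral>\<omega>. f (Tstep_pair (p, \<omega>)) \<partial>M) = indicator D p * mean_step mu_lim f p"
      using AE_in_Prob_on[OF Q_in D_borel] by eventually_elim (simp add: Tstep_pair_def mean_step_def)
  qed
  finally show ?thesis .
qed

lemma AE_tendsto_integral_emp_step:
  fixes g :: "'x \<Rightarrow> real"
  assumes g: "g \<in> borel_measurable borel" "continuous_on S g"
  shows "AE \<omega> in M. (\<lambda>N. integral\<^sup>L (emp_measure N (\<lambda>i. Tstep (ps N i) (mu_emp N) (Zs i \<omega>))) g)
           \<longlonglongrightarrow> integral\<^sup>L (Ttilde T M (Zs 1) D mu_lim Q z0) g"
  using AE_average_Tstep_deviation[OF g(2)]
proof eventually_elim
  case (elim \<omega>)
  have "(\<lambda>N. (\<Sum>i\<in>{1..N}. g (Tstep (ps N i) (mu_emp N) (Zs i \<omega>))) / real N)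
      \<longlonglongrightarrow> (\<integral>p. indicator D p * mean_step mu_lim g p \<partial>Q)"
    using tendsto_add[OF elim tendsto_average_mean_step[OF g(2)]] by simp
  moreover have "eventually (\<lambda>N. (\<Sum>i\<in>{1..N}. g (Tstep (ps N i) (mu_emp N) (Zs i \<omega>))) / real N
      = integral\<^sup>L (emp_measure N (\<lambda>i. Tstep (ps N i) (mu_emp N) (Zs i \<omega>))) g) sequentially"
    using eventually_ge_at_top[of 1] by eventually_elim (simp add: integral_emp_measure g(1))
  ultimately show ?case
    unfolding integral_Ttilde[OF g] by (rule Lim_transform_eventually)
qed

lemma AE_weak_conv_on_emp_step:
  "AE \<omega> in M. weak_conv_on S (\<lambda>N. emp_measure N (\<lambda>i. Tstep (ps N i) (mu_emp N) (Zs i \<omega>)))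
     (Ttilde T M (Zs 1) D mu_lim Q z0)"
proof -
  have "AE \<omega> in M. \<forall>e. (\<lambda>N. integral\<^sup>L (emp_measure N (\<lambda>i. Tstep (ps N i) (mu_emp N) (Zs i \<omega>))) (qpoly_eval e))
           \<longlonglongrightarrow> integral\<^sup>L (Ttilde T M (Zs 1) D mu_lim Q z0) (qpoly_eval e)"
    unfolding AE_all_countable
    by (intro allI AE_tendsto_integral_emp_step borel_measurable_continuous_onI continuous_on_qpoly_eval)
  then show ?thesis
  proof eventually_elim
    case (elim \<omega>)
    have "eventually (\<lambda>N. emp_measure N (\<lambda>i. Tstep (ps N i) (mu_emp N) (Zs i \<omega>)) \<in> Prob_on S) sequentially"
      using eventually_ge_at_top[of 1]
      by eventually_elim (auto intro!: emp_measure_in_Prob_on S_borel Tstep_in ps_in mu_emp_in)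
    with elim show ?case
      by (intro weak_conv_on_qpolyI[OF S_compact _ Ttilde_in]) auto
  qed
qed

end

theorem mainTheorem7:
  fixes S :: "'x::euclidean_space set" and A :: "'a::euclidean_space set"
    and Dx :: "'x \<Rightarrow> 'a set" and D :: "('x \<times> 'a) set"
    and T :: "'x \<Rightarrow> 'a \<Rightarrow> 'x measure \<Rightarrow> 'z::metric_space \<Rightarrow> 'z \<Rightarrow> 'x"
    and xs :: "nat \<Rightarrow> nat \<Rightarrow> 'x" and as :: "nat \<Rightarrow> nat \<Rightarrow> 'a"
    and Q :: "('x \<times> 'a) measure"
    and M :: "'w measure" and Zs :: "nat \<Rightarrow> 'w \<Rightarrow> 'z" and PZ :: "'z measure" and z0 :: 'z
  assumes S_compact: "compact S" and S_borel: "S \<in> sets borel"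
    and A_borel: "A \<in> sets borel"
    and Dx_sub: "\<And>x. x \<in> S \<Longrightarrow> Dx x \<subseteq> A"
    and D_def: "D = {(x, a). x \<in> S \<and> a \<in> Dx x}"
    and A0: "compact D"
    and Z_compact: "compact (UNIV :: 'z set)"
    and A3': "continuous_map
       (prod_topology (top_of_set S) (prod_topology (top_of_set A)
         (prod_topology (weak_topology S) (prod_topology euclidean euclidean))))
       (top_of_set S) (\<lambda>(x, a, \<mu>, z, z'). T x a \<mu> z z')"
    and xs_in: "\<And>N i. i \<in> {1..N} \<Longrightarrow> xs N i \<in> S"
    and as_in: "\<And>N i. i \<in> {1..N} \<Longrightarrow> as N i \<in> Dx (xs N i)"
    and Q_in: "Q \<in> Prob_on D"
    and Q_conv: "weak_conv_on D (\<lambda>N. emp_measure N (\<lambda>i. (xs N i, as N i))) Q"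
    and M_prob: "prob_space M"
    and Zs_rv: "\<And>i. Zs i \<in> measurable M borel"
    and Zs_indep: "prob_space.indep_vars M (\<lambda>_. borel) Zs UNIV"
    and Zs_law: "\<And>i. distr M borel (Zs i) = PZ"
  shows "AE \<omega> in M. weak_conv_on S
           (\<lambda>N. emp_measure N (\<lambda>i. T (xs N i) (as N i) (emp_measure N (xs N)) (Zs i \<omega>) z0))
           (Ttilde T M (Zs 1) D (distr Q borel fst) Q z0)"
proof -
  have D_subset: "D \<subseteq> S \<times> A" using Dx_sub by (auto simp: D_def)
  interpret empirical_random_step M S A D T Zs z0 Q "\<lambda>N i. (xs N i, as N i)"
  proof (intro empirical_random_step.intro random_step.intro random_step_axioms.intro
      empirical_random_step_axioms.intro)
    show "(xs N i, as N i) \<in> D" if "i \<in> {1..N}" for N i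
      using xs_in[OF that] as_in[OF that] by (simp add: D_def)
  qed (use assms D_subset in simp_all)
  show ?thesis
    using AE_weak_conv_on_emp_step unfolding Tstep_def mu_emp_def mu_lim_def by (simp add: o_def)
qed

end
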